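(* For $0<\rho\le1$ and $\varphi\in[0,2\pi]$ let $A(\rho,\varphi)=D_\rho T_\varphi D_\rho^{-1}=\begin{pmatrix}\cos\varphi&-\rho^{-1}\sin\varphi\\ \rho\sin\varphi&\cos\varphi\end{pmatrix}$ and let $\theta_1(\varphi,\rho):=\theta_1^{\sup,\varlimsup}$ be the first outer angular value of the autonomous discrete system $u_{n+1}=A(\rho,\varphi)u_n$ in $\mathbb R^2$. Then $(\varphi,\rho)\mapsto\theta_1(\varphi,\rho)$ is upper semicontinuous on $[0,2\pi]\times(0,1]$.
   Context: $D_\rho=\mathrm{diag}(1,\rho)$, $T_\varphi=\begin{pmatrix}\cos\varphi&-\sin\varphi\\ \sin\varphi&\cos\varphi\end{pmatrix}$. For a sequence of invertible matrices $A_n$ (here $A_n\equiv A(\rho,\varphi)$), $\Phi(n,0)=A_{n-1}\cdots A_0$, $\Phi(0,0)=I$. For nonzero $x,y\in\mathbb R^2$ (identified with lines), $\angle(x,y)\in[0,\pi/2]$ is the angle between $\mathrm{span}(x)$ and $\mathrm{span}(y)$, i.e. $\cos\angle(x,y)=|x^\top y|/(\|x\|\|y\|)$. The first outer angular value is $\theta_1^{\sup,\varlimsup}=\sup_{v\ne0}\varlimsup_{n\to\infty}\frac1n\sum_{j=1}^n\angle(\Phi(j-1,0)v,\Phi(j,0)v)$. It is known that for this system this value coincides with the three other angular values ($\sup$ over $v$ outside or inside, $\varlimsup$ or $\varliminf$). *)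

theory Defs
  imports "HOL-Analysis.Analysis"
begin

text \<open>The matrix A(rho,phi) = D_rho T_phi D_rho^{-1}, written out explicitly.\<close>
definition Amat :: "real \<Rightarrow> real \<Rightarrow> real^2^2" where
  "Amat rho phi = vector [vector [cos phi, - sin phi / rho], vector [rho * sin phi, cos phi]]"

fun Phi :: "(nat \<Rightarrow> real^2^2) \<Rightarrow> nat \<Rightarrow> real^2^2" where
  "Phi As 0 = mat 1"
| "Phi As (Suc n) = As n ** Phi As n"

definition line_angle :: "real^2 \<Rightarrow> real^2 \<Rightarrow> real" where
  "line_angle x y = arccos (\<bar>x \<bullet> y\<bar> / (norm x * norm y))"

definition theta1_outer :: "(nat \<Rightarrow> real^2^2) \<Rightarrow> ereal" where
  "theta1_outer As =
     (SUP v \<in> {v :: real^2. v \<noteq> 0}.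
        limsup (\<lambda>n. ereal ((1 / real n) *
          (\<Sum>j = 1..n. line_angle (Phi As (j - 1) *v v) (Phi As j *v v)))))"

definition upper_semicontinuous_on :: "'a::topological_space set \<Rightarrow> ('a \<Rightarrow> 'b::linorder) \<Rightarrow> bool" where
  "upper_semicontinuous_on S f \<longleftrightarrow>
     (\<forall>x\<in>S. \<forall>a. f x < a \<longrightarrow> (\<forall>\<^sub>F y in at x within S. f y < a))"

end

theory Submission
  imports Defs
begin

(* Conjugating by D_rho turns every orbit of A(rho, phi) into an orbit of the rotation by phi on
   the unit circle, so theta_1 is the largest asymptotic average of the Birkhoff sums S_n of the
   continuous function "angle between D_rho p and D_rho (T_phi p)" along an isometry of a compact
   space.  For such systems sup_p limsup S_n(p)/n = inf_N (max S_N)/N: cutting an orbit into blocks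
   of length N gives "<=", and compactness together with the equicontinuity of the S_n/n (the map
   is an isometry) lets near-maximisers of S_N accumulate at one point, which gives ">=".  Each
   max S_N depends continuously on (phi, rho), and an infimum of continuous functions is upper
   semicontinuous. *)

section \<open>Semicontinuity and suprema over compact sets\<close>

lemma upper_semicontinuous_on_cong:
  assumes "\<And>x. x \<in> S \<Longrightarrow> f x = g x"
  shows "upper_semicontinuous_on S f \<longleftrightarrow> upper_semicontinuous_on S g"
proof -
  have "(\<forall>\<^sub>F y in at x within S. f y < a) \<longleftrightarrow> (\<forall>\<^sub>F y in at x within S. g y < a)" for x a
    using assms by (intro eventually_cong) (auto simp: eventually_at_filter)
  then show ?thesis
    using assms by (simp add: upper_semicontinuous_on_def)
qed

lemma upper_semicontinuous_on_INF:
  fixes f :: "'i \<Rightarrow> 'a::topological_space \<Rightarrow> 'b::complete_linorder"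
  assumes "\<And>i. i \<in> I \<Longrightarrow> upper_semicontinuous_on S (f i)"
  shows "upper_semicontinuous_on S (\<lambda>x. INF i\<in>I. f i x)"
  unfolding upper_semicontinuous_on_def
proof (intro ballI allI impI)
  fix x a assume "x \<in> S" "(INF i\<in>I. f i x) < a"
  then obtain i where "i \<in> I" "f i x < a"
    by (auto simp: INF_less_iff)
  then have "\<forall>\<^sub>F y in at x within S. f i y < a"
    using assms \<open>x \<in> S\<close> unfolding upper_semicontinuous_on_def by blast
  then show "\<forall>\<^sub>F y in at x within S. (INF i\<in>I. f i y) < a"
    by (rule eventually_mono) (rule order.strict_trans1[OF INF_lower[OF \<open>i \<in> I\<close>]])
qed

lemma continuous_on_imp_upper_semicontinuous_on:
  assumes "continuous_on S f"
  shows "upper_semicontinuous_on S (\<lambda>x. ereal (f x))"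
  unfolding upper_semicontinuous_on_def
proof (intro ballI allI impI)
  fix x a assume "x \<in> S" "ereal (f x) < a"
  have "((\<lambda>y. ereal (f y)) \<longlongrightarrow> ereal (f x)) (at x within S)"
    using assms \<open>x \<in> S\<close> by (intro tendsto_ereal) (simp add: continuous_on_def)
  then show "\<forall>\<^sub>F y in at x within S. ereal (f y) < a"
    using \<open>ereal (f x) < a\<close> by (rule order_tendstoD)
qed

lemma cSUP_le_cSUP_plus:
  fixes f g :: "'a \<Rightarrow> real"
  assumes "K \<noteq> {}" "bdd_above (g ` K)" "\<And>p. p \<in> K \<Longrightarrow> f p \<le> g p + e"
  shows "(SUP p\<in>K. f p) \<le> (SUP p\<in>K. g p) + e"
proof (rule cSUP_least[OF assms(1)])
  fix p assume "p \<in> K"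
  then have "g p \<le> (SUP p\<in>K. g p)"
    by (rule cSUP_upper[OF _ assms(2)])
  then show "f p \<le> (SUP p\<in>K. g p) + e"
    using assms(3)[OF \<open>p \<in> K\<close>] by linarith
qed

lemma bdd_above_compact_slice:
  assumes "compact K" "continuous_on (U \<times> K) (\<lambda>z. g (fst z) (snd z))" "x \<in> U"
  shows "bdd_above (g x ` K :: real set)"
proof -
  have "continuous_on K (g x)"
    using continuous_on_compose2[OF assms(2)
        continuous_on_Pair[OF continuous_on_const continuous_on_id]] assms(3)
    by auto
  then show ?thesis
    by (intro bounded_imp_bdd_above compact_imp_bounded compact_continuous_image assms(1))
qed

lemma continuous_on_SUP_compact:
  fixes g :: "'a::heine_borel \<Rightarrow> 'b::metric_space \<Rightarrow> real"
  assumes "open U" "compact K" "K \<noteq> {}" and g: "continuous_on (U \<times> K) (\<lambda>z. g (fst z) (snd z))"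
  shows "continuous_on U (\<lambda>x. SUP p\<in>K. g x p)"
  unfolding continuous_on_iff
proof (intro ballI allI impI)
  fix x e assume "x \<in> U" "(0::real) < e"
  note bdd = bdd_above_compact_slice[OF \<open>compact K\<close> g]
  obtain r where "r > 0" "cball x r \<subseteq> U"
    using \<open>open U\<close> \<open>x \<in> U\<close> open_contains_cball by blast
  have "uniformly_continuous_on (cball x r \<times> K) (\<lambda>z. g (fst z) (snd z))"
    using \<open>cball x r \<subseteq> U\<close> \<open>compact K\<close>
    by (intro compact_uniformly_continuous compact_Times compact_cball continuous_on_subset[OF g])
      auto
  then obtain \<delta> where "\<delta> > 0" and \<delta>: "\<And>z z'. z \<in> cball x r \<times> K \<Longrightarrow> z' \<in> cball x r \<times> K \<Longrightarrow>
      dist z' z < \<delta> \<Longrightarrow> dist (g (fst z') (snd z')) (g (fst z) (snd z)) < e / 2"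
    using \<open>e > 0\<close> unfolding uniformly_continuous_on_def by (metis half_gt_zero)
  show "\<exists>d>0. \<forall>y\<in>U. dist y x < d \<longrightarrow> dist (SUP p\<in>K. g y p) (SUP p\<in>K. g x p) < e"
  proof (intro exI[of _ "min \<delta> r"] conjI ballI impI)
    fix y assume "y \<in> U" "dist y x < min \<delta> r"
    then have close: "g y p \<le> g x p + e / 2 \<and> g x p \<le> g y p + e / 2" if "p \<in> K" for p
      using \<delta>[of "(x, p)" "(y, p)"] that \<open>r > 0\<close>
      by (auto simp add: dist_Pair_Pair dist_commute dist_real_def abs_if split: if_split_asm)
    have "(SUP p\<in>K. g y p) \<le> (SUP p\<in>K. g x p) + e / 2"
      by (intro cSUP_le_cSUP_plus \<open>K \<noteq> {}\<close> bdd \<open>x \<in> U\<close>) (use close in blast)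
    moreover have "(SUP p\<in>K. g x p) \<le> (SUP p\<in>K. g y p) + e / 2"
      by (intro cSUP_le_cSUP_plus \<open>K \<noteq> {}\<close> bdd \<open>y \<in> U\<close>) (use close in blast)
    ultimately show "dist (SUP p\<in>K. g y p) (SUP p\<in>K. g x p) < e"
      using \<open>e > 0\<close> by (simp add: dist_real_def abs_less_iff)
  qed (use \<open>\<delta> > 0\<close> \<open>r > 0\<close> in simp)
qed

section \<open>Birkhoff sums along an isometry\<close>

definition birkhoff_sum :: "('a \<Rightarrow> 'a) \<Rightarrow> ('a \<Rightarrow> real) \<Rightarrow> nat \<Rightarrow> 'a \<Rightarrow> real" where
  "birkhoff_sum T h n p = (\<Sum>k<n. h ((T ^^ k) p))"

definition max_birkhoff_sum :: "'a set \<Rightarrow> ('a \<Rightarrow> 'a) \<Rightarrow> ('a \<Rightarrow> real) \<Rightarrow> nat \<Rightarrow> real" where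
  "max_birkhoff_sum X T h n = (SUP p\<in>X. birkhoff_sum T h n p)"

lemma birkhoff_sum_add:
  "birkhoff_sum T h (m + n) p = birkhoff_sum T h m p + birkhoff_sum T h n ((T ^^ m) p)"
  by (induction n) (simp_all add: birkhoff_sum_def funpow_add add.commute)

locale isometric_dynamics =
  fixes X :: "'a::metric_space set" and T :: "'a \<Rightarrow> 'a" and h :: "'a \<Rightarrow> real" and c :: real
  assumes compact: "compact X" and nonempty: "X \<noteq> {}"
    and maps_to: "\<And>p. p \<in> X \<Longrightarrow> T p \<in> X"
    and isometric: "\<And>p q. p \<in> X \<Longrightarrow> q \<in> X \<Longrightarrow> dist (T p) (T q) = dist p q"
    and continuous: "continuous_on X h"
    and bounds: "\<And>p. p \<in> X \<Longrightarrow> 0 \<le> h p \<and> h p \<le> c"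
begin

abbreviation S :: "nat \<Rightarrow> 'a \<Rightarrow> real" where "S \<equiv> birkhoff_sum T h"
abbreviation B :: "nat \<Rightarrow> real" where "B \<equiv> max_birkhoff_sum X T h"

lemma funpow_in: "p \<in> X \<Longrightarrow> (T ^^ k) p \<in> X"
  by (induction k) (auto intro: maps_to)

lemma birkhoff_sum_bounds: "p \<in> X \<Longrightarrow> 0 \<le> S n p \<and> S n p \<le> n * c"
  using sum_bounded_above[of "{..<n}" "\<lambda>k. h ((T ^^ k) p)" c]
  by (auto simp: birkhoff_sum_def funpow_in bounds intro!: sum_nonneg)

lemma bdd_above_birkhoff_sum: "bdd_above (S n ` X)"
  using birkhoff_sum_bounds by (auto intro!: bdd_aboveI2)

lemma birkhoff_sum_le_max: "p \<in> X \<Longrightarrow> S n p \<le> B n"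
  unfolding max_birkhoff_sum_def by (rule cSUP_upper[OF _ bdd_above_birkhoff_sum])

lemma max_birkhoff_sum_nonneg: "0 \<le> B n"
  using nonempty birkhoff_sum_bounds birkhoff_sum_le_max by (meson ex_in_conv order.trans)

lemma birkhoff_sum_le_blocks: "p \<in> X \<Longrightarrow> S (q * N + s) p \<le> q * B N + s * c"
proof (induction q arbitrary: p)
  case 0
  then show ?case using birkhoff_sum_bounds by simp
next
  case (Suc q)
  have "S (Suc q * N + s) p = S N p + S (q * N + s) ((T ^^ N) p)"
    by (simp add: birkhoff_sum_add add.assoc)
  also have "\<dots> \<le> B N + (q * B N + s * c)"
    using Suc by (intro add_mono birkhoff_sum_le_max Suc.IH funpow_in)
  finally show ?case by (simp add: algebra_simps)
qed

lemma birkhoff_average_le: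
  assumes "p \<in> X" "N \<ge> 1" "n \<ge> 1"
  shows "S n p / n \<le> B N / N + N * c / n"
proof -
  have "S n p \<le> (n div N) * B N + (n mod N) * c"
    using birkhoff_sum_le_blocks[OF assms(1), of "n div N" N "n mod N"] by simp
  also have "\<dots> \<le> n / N * B N + N * c"
  proof (intro add_mono mult_right_mono)
    show "real (n div N) \<le> n / N"
      by (rule of_nat_div_le_of_nat)
    show "real (n mod N) \<le> real N" using assms(2) by simp
    show "0 \<le> c" using bounds nonempty by (meson all_not_in_conv order.trans)
  qed (rule max_birkhoff_sum_nonneg)
  finally show ?thesis using assms(2,3) by (simp add: field_simps)
qed

lemma limsup_birkhoff_average_le:
  assumes "p \<in> X" "N \<ge> 1"
  shows "limsup (\<lambda>n. ereal (S n p / n)) \<le> ereal (B N / N)"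
proof -
  have "limsup (\<lambda>n. ereal (S n p / n)) \<le> limsup (\<lambda>n. ereal (B N / N + N * c / n))"
    by (intro Limsup_mono eventually_mono[OF eventually_ge_at_top[of 1]])
      (simp add: birkhoff_average_le[OF assms])
  also have "\<dots> = ereal (B N / N)"
    using tendsto_add[OF tendsto_const lim_const_over_n, of "B N / N" "N * c"]
    by (intro lim_imp_Limsup tendsto_ereal) auto
  finally show ?thesis .
qed

lemma dist_funpow: "p \<in> X \<Longrightarrow> q \<in> X \<Longrightarrow> dist ((T ^^ k) p) ((T ^^ k) q) = dist p q"
  by (induction k) (simp_all add: isometric funpow_in)

lemma birkhoff_sum_equicontinuous:
  fixes \<epsilon> :: real
  assumes "\<epsilon> > 0"
  obtains \<delta> where "\<delta> > 0"
    "\<And>p q n. p \<in> X \<Longrightarrow> q \<in> X \<Longrightarrow> dist p q < \<delta> \<Longrightarrow> dist (S n p) (S n q) \<le> n * \<epsilon>"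
proof -
  obtain \<delta> where "\<delta> > 0" and h_close:
      "\<And>x y. x \<in> X \<Longrightarrow> y \<in> X \<Longrightarrow> dist x y < \<delta> \<Longrightarrow> dist (h x) (h y) \<le> \<epsilon>"
    using compact_uniformly_continuous[OF continuous compact] assms
    unfolding uniformly_continuous_on_def by (metis dist_commute less_imp_le)
  have "dist (S n p) (S n q) \<le> n * \<epsilon>" if "p \<in> X" "q \<in> X" "dist p q < \<delta>" for p q n
  proof -
    have "dist (S n p) (S n q) \<le> (\<Sum>k<n. dist (h ((T ^^ k) p)) (h ((T ^^ k) q)))"
      unfolding birkhoff_sum_def by (rule dist_sum_le)
    also have "\<dots> \<le> (\<Sum>k<n. \<epsilon>)"
      using that by (intro sum_mono h_close) (simp_all add: funpow_in dist_funpow)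
    finally show ?thesis by simp
  qed
  with \<open>\<delta> > 0\<close> show ?thesis by (rule that)
qed

lemma birkhoff_average_ge_of_close:
  fixes \<epsilon> :: real
  assumes "\<epsilon> > 0" "2 / \<epsilon> \<le> m" "m * b - 1 < S m p" "dist (S m p) (S m q) \<le> m * (\<epsilon> / 2)"
  shows "b - \<epsilon> \<le> S m q / m"
proof -
  have "0 < 2 / \<epsilon>"
    using assms(1) by simp
  with assms(2) have "m > 0"
    by linarith
  have "2 \<le> m * \<epsilon>"
    using assms(1,2) by (simp add: pos_divide_le_eq)
  then have "m * (b - \<epsilon>) \<le> S m q"
    using assms(3,4) unfolding dist_real_def right_diff_distrib by linarith
  with \<open>m > 0\<close> show ?thesis
    by (simp add: pos_le_divide_eq mult.commute)
qed

lemma limsup_birkhoff_average_ge: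
  assumes "\<And>N. N \<ge> 1 \<Longrightarrow> N * b \<le> B N"
  obtains l where "l \<in> X" "ereal b \<le> limsup (\<lambda>n. ereal (S n l / n))"
proof -
  have "\<exists>p\<in>X. B (Suc n) - 1 < S (Suc n) p" for n
    using nonempty unfolding max_birkhoff_sum_def
    by (subst less_cSUP_iff[symmetric, OF _ bdd_above_birkhoff_sum]) auto
  then obtain P where P_in: "\<And>n. P n \<in> X" and P_big: "\<And>n. B (Suc n) - 1 < S (Suc n) (P n)"
    by metis
  obtain l R where l: "l \<in> X" and R: "strict_mono R" and lim: "(P \<circ> R) \<longlonglongrightarrow> l"
    using compact P_in unfolding compact_def by metis
  (* l inherits the near-maximality of the P (R k), because the averages S m / m are
     equicontinuous uniformly in m. *)
  have "ereal b \<le> limsup (\<lambda>n. ereal (S n l / n))"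
  proof (rule ereal_le_epsilon2)
    fix \<epsilon> :: real assume "\<epsilon> > 0"
    obtain \<delta> where "\<delta> > 0" and \<delta>:
      "\<And>p q n. p \<in> X \<Longrightarrow> q \<in> X \<Longrightarrow> dist p q < \<delta> \<Longrightarrow> dist (S n p) (S n q) \<le> n * (\<epsilon> / 2)"
      by (rule birkhoff_sum_equicontinuous[where \<epsilon> = "\<epsilon> / 2"]) (use \<open>\<epsilon> > 0\<close> in auto)
    have "\<forall>\<^sub>F k in sequentially. dist (P (R k)) l < \<delta>"
      using lim \<open>\<delta> > 0\<close> by (simp add: tendsto_iff comp_def)
    then have "\<forall>\<^sub>F k in sequentially. ereal (b - \<epsilon>) \<le> ereal (S (Suc (R k)) l / Suc (R k))"
      using eventually_ge_at_top[of "nat \<lceil>2 / \<epsilon>\<rceil>"]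
    proof eventually_elim
      case (elim k)
      have "2 / \<epsilon> \<le> Suc (R k)"
        using real_nat_ceiling_ge[of "2 / \<epsilon>"] elim(2) seq_suble[OF R, of k] by simp
      with \<open>\<epsilon> > 0\<close> have "b - \<epsilon> \<le> S (Suc (R k)) l / Suc (R k)"
        using P_big[of "R k"] assms[of "Suc (R k)"] \<delta>[OF P_in l elim(1), of "Suc (R k)"]
        by (intro birkhoff_average_ge_of_close[where p = "P (R k)"]) auto
      then show ?case
        by simp
    qed
    then have "ereal (b - \<epsilon>) \<le> limsup ((\<lambda>n. ereal (S n l / n)) \<circ> (Suc \<circ> R))"
      by (intro le_Limsup) (simp_all add: comp_def)
    also have "\<dots> \<le> limsup (\<lambda>n. ereal (S n l / n))"
      using R by (intro limsup_subseq_mono) (simp add: strict_mono_def)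
    finally have "ereal (b - \<epsilon>) + ereal \<epsilon> \<le> limsup (\<lambda>n. ereal (S n l / n)) + ereal \<epsilon>"
      by (rule add_right_mono)
    then show "ereal b \<le> limsup (\<lambda>n. ereal (S n l / n)) + ereal \<epsilon>"
      by simp
  qed
  with l show ?thesis by (rule that)
qed

theorem SUP_limsup_birkhoff_average:
  "(SUP p\<in>X. limsup (\<lambda>n. ereal (S n p / n))) = (INF N\<in>{1..}. ereal (B N / N))"
proof (rule antisym)
  show "(SUP p\<in>X. limsup (\<lambda>n. ereal (S n p / n))) \<le> (INF N\<in>{1..}. ereal (B N / N))"
    by (intro SUP_least INF_greatest limsup_birkhoff_average_le) auto
  show "(INF N\<in>{1..}. ereal (B N / N)) \<le> (SUP p\<in>X. limsup (\<lambda>n. ereal (S n p / n)))"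
  proof (rule dense_le)
    fix y assume y: "y < (INF N\<in>{1..}. ereal (B N / N))"
    show "y \<le> (SUP p\<in>X. limsup (\<lambda>n. ereal (S n p / n)))"
    proof (cases y)
      case (real b)
      have "N * b \<le> B N" if "N \<ge> 1" for N
      proof -
        have "ereal b < ereal (B N / N)"
          using that by (intro less_INF_D[OF y[unfolded real]]) simp
        then show ?thesis
          using that by (simp add: field_simps)
      qed
      then obtain l where "l \<in> X" "ereal b \<le> limsup (\<lambda>n. ereal (S n l / n))"
        by (rule limsup_birkhoff_average_ge)
      then show ?thesis
        using real by (auto intro: SUP_upper2)
    qed (use y in simp_all)
  qed
qed

end

section \<open>The conjugated rotation\<close>

definition rot :: "real \<Rightarrow> real^2 \<Rightarrow> real^2" where
  "rot \<phi> v = vector [cos \<phi> * v$1 - sin \<phi> * v$2, sin \<phi> * v$1 + cos \<phi> * v$2]"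

definition diag_scale :: "real \<Rightarrow> real^2 \<Rightarrow> real^2" where
  "diag_scale \<rho> v = vector [v$1, \<rho> * v$2]"

definition step_angle :: "real \<Rightarrow> real \<Rightarrow> real^2 \<Rightarrow> real" where
  "step_angle \<rho> \<phi> p = line_angle (diag_scale \<rho> p) (diag_scale \<rho> (rot \<phi> p))"

lemma vec2_eq_iff: "(v :: 'a^2) = w \<longleftrightarrow> v$1 = w$1 \<and> v$2 = w$2"
  by (simp add: vec_eq_iff forall_2)

lemma inner_vec2: "(v :: real^2) \<bullet> w = v$1 * w$1 + v$2 * w$2"
  by (simp add: inner_vec_def sum_2)

lemma continuous_on_vector2 [continuous_intros]:
  assumes "continuous_on S a" "continuous_on S b"
  shows "continuous_on S (\<lambda>z. vector [a z, b z] :: real^2)"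
proof -
  have eq: "(\<lambda>z. vector [a z, b z] :: real^2) = (\<lambda>z. \<chi> i. if i = 1 then a z else b z)"
    by (simp add: fun_eq_iff vec2_eq_iff)
  have "continuous_on S (\<lambda>z. if i = 1 then a z else b z)" for i :: 2
    using assms by (cases "i = 1") simp_all
  then show ?thesis
    unfolding eq by (rule continuous_on_vec_lambda)
qed

lemma rot_rot: "rot \<alpha> (rot \<beta> v) = rot (\<alpha> + \<beta>) v"
  by (simp add: rot_def vec2_eq_iff cos_add sin_add algebra_simps)

lemma funpow_rot: "rot \<phi> ^^ k = rot (k * \<phi>)"
proof (induction k)
  case 0
  show ?case by (simp add: fun_eq_iff rot_def vec2_eq_iff)
next
  case (Suc k)
  then show ?case by (simp add: fun_eq_iff rot_rot algebra_simps)
qed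

lemma rot_scaleR: "rot \<phi> (c *\<^sub>R v) = c *\<^sub>R rot \<phi> v"
  by (simp add: rot_def vec2_eq_iff algebra_simps)

lemma rot_diff: "rot \<phi> v - rot \<phi> w = rot \<phi> (v - w)"
  by (simp add: rot_def vec2_eq_iff algebra_simps)

lemma norm_rot: "norm (rot \<phi> v) = norm v"
proof -
  have "rot \<phi> v \<bullet> rot \<phi> v = ((sin \<phi>)\<^sup>2 + (cos \<phi>)\<^sup>2) * (v \<bullet> v)"
    unfolding rot_def inner_vec2 vector_2 by algebra
  then show ?thesis
    by (simp add: norm_eq_sqrt_inner)
qed

lemma rot_eq_0_iff: "rot \<phi> v = 0 \<longleftrightarrow> v = 0"
  by (metis norm_eq_zero norm_rot)

lemma dist_rot: "dist (rot \<phi> v) (rot \<phi> w) = dist v w"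
  by (simp add: dist_norm rot_diff norm_rot)

lemma diag_scale_scaleR: "diag_scale \<rho> (c *\<^sub>R v) = c *\<^sub>R diag_scale \<rho> v"
  by (simp add: diag_scale_def vec2_eq_iff)

lemma diag_scale_eq_0_iff: "\<rho> \<noteq> 0 \<Longrightarrow> diag_scale \<rho> v = 0 \<longleftrightarrow> v = 0"
  by (simp add: diag_scale_def vec2_eq_iff)

lemma diag_scale_diag_scale: "diag_scale a (diag_scale b v) = diag_scale (a * b) v"
  by (simp add: diag_scale_def vec2_eq_iff)

lemma diag_scale_1: "diag_scale 1 v = v"
  by (simp add: diag_scale_def vec2_eq_iff)

lemma Amat_diag_scale: "\<rho> \<noteq> 0 \<Longrightarrow> Amat \<rho> \<phi> *v diag_scale \<rho> v = diag_scale \<rho> (rot \<phi> v)"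
  by (simp add: Amat_def diag_scale_def rot_def matrix_vector_mult_def sum_2 vec2_eq_iff
      algebra_simps)

lemma Phi_Amat_diag_scale:
  assumes "\<rho> \<noteq> 0"
  shows "Phi (\<lambda>_. Amat \<rho> \<phi>) j *v diag_scale \<rho> v = diag_scale \<rho> ((rot \<phi> ^^ j) v)"
proof (induction j)
  case (Suc j)
  then show ?case
    by (simp add: matrix_vector_mul_assoc[symmetric] Amat_diag_scale[OF assms])
qed simp

lemma line_angle_scaleR: "c \<noteq> 0 \<Longrightarrow> line_angle (c *\<^sub>R x) (c *\<^sub>R y) = line_angle x y"
  by (simp add: line_angle_def abs_mult mult_ac)

lemma line_angle_cos_bounds: "0 \<le> \<bar>x \<bullet> y\<bar> / (norm x * norm y) \<and> \<bar>x \<bullet> y\<bar> / (norm x * norm y) \<le> 1"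
  using Cauchy_Schwarz_ineq2[of x y]
  by (cases "norm x * norm y = 0") (simp_all add: divide_le_eq_1)

lemma line_angle_bounds: "0 \<le> line_angle x y \<and> line_angle x y \<le> pi / 2"
  unfolding line_angle_def
  by (intro conjI arccos_lbound arccos_le_pi2) (use line_angle_cos_bounds[of x y] in linarith)+

lemma continuous_on_line_angle [continuous_intros]:
  assumes "continuous_on S f" "continuous_on S g" "\<And>z. z \<in> S \<Longrightarrow> f z \<noteq> 0 \<and> g z \<noteq> 0"
  shows "continuous_on S (\<lambda>z. line_angle (f z) (g z))"
  unfolding line_angle_def
proof (rule continuous_on_arccos)
  show "continuous_on S (\<lambda>z. \<bar>f z \<bullet> g z\<bar> / (norm (f z) * norm (g z)))"
    using assms by (intro continuous_intros) auto
  show "\<forall>z\<in>S. - 1 \<le> \<bar>f z \<bullet> g z\<bar> / (norm (f z) * norm (g z))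
      \<and> \<bar>f z \<bullet> g z\<bar> / (norm (f z) * norm (g z)) \<le> 1"
    using line_angle_cos_bounds by (smt (verit))
qed

lemma continuous_on_rot [continuous_intros]:
  "continuous_on S f \<Longrightarrow> continuous_on S g \<Longrightarrow> continuous_on S (\<lambda>z. rot (f z) (g z))"
  for S :: "'a::t2_space set"
  unfolding rot_def by (intro continuous_intros)

lemma continuous_on_diag_scale [continuous_intros]:
  "continuous_on S f \<Longrightarrow> continuous_on S g \<Longrightarrow> continuous_on S (\<lambda>z. diag_scale (f z) (g z))"
  unfolding diag_scale_def by (intro continuous_intros)

lemma angle_sum_Amat_eq_birkhoff_sum:
  assumes "\<rho> \<noteq> 0" "v \<noteq> 0"
  shows "(\<Sum>j = 1..n. line_angle (Phi (\<lambda>_. Amat \<rho> \<phi>) (j - 1) *v v) (Phi (\<lambda>_. Amat \<rho> \<phi>) j *v v))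
       = birkhoff_sum (rot \<phi>) (step_angle \<rho> \<phi>) n (sgn (diag_scale (1 / \<rho>) v))"
proof -
  define u where "u = diag_scale (1 / \<rho>) v"
  have "u \<noteq> 0"
    using assms by (simp add: u_def diag_scale_eq_0_iff)
  have v_eq: "v = diag_scale \<rho> (norm u *\<^sub>R sgn u)"
    using \<open>u \<noteq> 0\<close> assms by (simp add: sgn_div_norm u_def diag_scale_diag_scale diag_scale_1)
  have orbit: "Phi (\<lambda>_. Amat \<rho> \<phi>) j *v v = norm u *\<^sub>R diag_scale \<rho> ((rot \<phi> ^^ j) (sgn u))"
    for j
    by (subst v_eq, subst Phi_Amat_diag_scale[OF assms(1)])
      (simp add: funpow_rot rot_scaleR diag_scale_scaleR)
  show ?thesis
    unfolding birkhoff_sum_def orbit u_def[symmetric] using \<open>u \<noteq> 0\<close>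
    by (simp add: sum.atLeast1_atMost_eq line_angle_scaleR step_angle_def)
qed

lemma sgn_diag_scale_image:
  assumes "\<rho> \<noteq> 0"
  shows "(\<lambda>v. sgn (diag_scale (1 / \<rho>) v)) ` {v. v \<noteq> 0} = sphere 0 1"
proof
  show "(\<lambda>v. sgn (diag_scale (1 / \<rho>) v)) ` {v. v \<noteq> 0} \<subseteq> sphere 0 1"
    using assms by (auto simp: norm_sgn diag_scale_eq_0_iff)
  show "sphere 0 1 \<subseteq> (\<lambda>v. sgn (diag_scale (1 / \<rho>) v)) ` {v. v \<noteq> 0}"
  proof
    fix p :: "real^2" assume "p \<in> sphere 0 1"
    then have "p = sgn (diag_scale (1 / \<rho>) (diag_scale \<rho> p))" "diag_scale \<rho> p \<noteq> 0"
      using assms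
      by (auto simp: diag_scale_diag_scale diag_scale_1 sgn_div_norm diag_scale_eq_0_iff)
    then show "p \<in> (\<lambda>v. sgn (diag_scale (1 / \<rho>) v)) ` {v. v \<noteq> 0}"
      by blast
  qed
qed

lemma theta1_outer_Amat:
  assumes "\<rho> \<noteq> 0"
  shows "theta1_outer (\<lambda>_. Amat \<rho> \<phi>)
    = (SUP p\<in>sphere 0 1. limsup (\<lambda>n. ereal (birkhoff_sum (rot \<phi>) (step_angle \<rho> \<phi>) n p / n)))"
  unfolding theta1_outer_def sgn_diag_scale_image[OF assms, symmetric] image_image
  by (intro SUP_cong) (simp_all add: angle_sum_Amat_eq_birkhoff_sum[OF assms, simplified])

lemma isometric_dynamics_rot:
  assumes "\<rho> \<noteq> 0"
  shows "isometric_dynamics (sphere 0 1) (rot \<phi>) (step_angle \<rho> \<phi>) (pi / 2)"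
proof
  show "continuous_on (sphere 0 1) (step_angle \<rho> \<phi>)"
    unfolding step_angle_def using assms
    by (intro continuous_intros) (auto simp: diag_scale_eq_0_iff rot_eq_0_iff)
  show "0 \<le> step_angle \<rho> \<phi> p \<and> step_angle \<rho> \<phi> p \<le> pi / 2" for p
    unfolding step_angle_def by (rule line_angle_bounds)
qed (auto simp: norm_rot dist_rot)

lemma continuous_on_max_birkhoff_sum_step_angle:
  "continuous_on (UNIV \<times> {0<..})
     (\<lambda>(\<phi>, \<rho>). max_birkhoff_sum (sphere 0 1) (rot \<phi>) (step_angle \<rho> \<phi>) N)"
proof -
  have "continuous_on ((UNIV \<times> {0<..}) \<times> sphere (0 :: real^2) 1)
      (\<lambda>z :: (real \<times> real) \<times> (real^2).
        \<Sum>k<N. step_angle (snd (fst z)) (fst (fst z)) (rot (real k * fst (fst z)) (snd z)))"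
    unfolding step_angle_def
    by (intro continuous_intros)
      (auto simp: diag_scale_eq_0_iff rot_eq_0_iff)
  then have "continuous_on ((UNIV \<times> {0<..}) \<times> sphere 0 1) (\<lambda>z :: (real \<times> real) \<times> (real^2).
      birkhoff_sum (rot (fst (fst z))) (step_angle (snd (fst z)) (fst (fst z))) N (snd z))"
    by (simp add: birkhoff_sum_def funpow_rot)
  from continuous_on_SUP_compact[OF _ _ _ this] show ?thesis
    by (simp add: max_birkhoff_sum_def case_prod_unfold open_Times)
qed

theorem mainTheorem16:
  shows "upper_semicontinuous_on ({0..2 * pi} \<times> {0<..1})
           (\<lambda>(phi, rho). theta1_outer (\<lambda>n. Amat rho phi))"
proof -
  define B where "B N = (\<lambda>(\<phi>, \<rho>). max_birkhoff_sum (sphere 0 1) (rot \<phi>) (step_angle \<rho> \<phi>) N)"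
    for N
  have theta1_eq: "theta1_outer (\<lambda>n. Amat \<rho> \<phi>) = (INF N\<in>{1..}. ereal (B N (\<phi>, \<rho>) / N))"
    if "\<rho> > 0" for \<phi> \<rho>
    using that theta1_outer_Amat[of \<rho> \<phi>]
      isometric_dynamics.SUP_limsup_birkhoff_average[OF isometric_dynamics_rot, of \<rho> \<phi>]
    by (simp add: B_def)
  have "continuous_on ({0..2 * pi} \<times> {0<..1}) (\<lambda>x. B N x / N)" if "N \<ge> 1" for N
    unfolding B_def using that
    by (intro continuous_on_divide continuous_on_const
        continuous_on_subset[OF continuous_on_max_birkhoff_sum_step_angle]) auto
  then have "upper_semicontinuous_on ({0..2 * pi} \<times> {0<..1})
      (\<lambda>x. INF N\<in>{1..}. ereal (B N x / N))"
    by (intro upper_semicontinuous_on_INF continuous_on_imp_upper_semicontinuous_on) simp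
  then show ?thesis
    by (subst upper_semicontinuous_on_cong) (auto simp: theta1_eq)
qed

end
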